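(* Let $x_1,x_2,\ldots$ be a sequence of complex numbers and let $y_1,y_2,\ldots$ be its invert transform. Then for all integers $1\le k\le n$, \[k!\,B_{n,k}(y_1,2!\cdot y_2,3!\cdot y_3,\ldots)=\sum_{i=k}^n\binom{i-1}{k-1}\,i!\,B_{n,i}(x_1,2!\cdot x_2,3!\cdot x_3,\ldots).\]
   Context: The invert transform $(y_n)_{n\ge1}$ of $(x_n)_{n\ge1}$ is defined by $y_n=x_n+\sum_{i=1}^{n-1}x_i\,y_{n-i}$ for $n\ge1$, equivalently $1+\sum_{n\ge1}y_nt^n=\bigl(1-\sum_{n\ge1}x_nt^n\bigr)^{-1}$. The partial Bell polynomial is $B_{n,k}(z_1,z_2,\ldots)=\sum \frac{n!}{j_1!j_2!\cdots}\prod_{i\ge1}\left(\frac{z_i}{i!}\right)^{j_i}$, the sum over nonnegative integers $j_1,j_2,\ldots$ with $\sum_i j_i=k$ and $\sum_i i\,j_i=n$. *)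

theory Defs
  imports "HOL-Analysis.Analysis" "HOL-Library.FuncSet"
begin

text \<open>Sequences are indexed from 1; the value at index 0 is ignored.\<close>

definition invert_transform :: "(nat \<Rightarrow> complex) \<Rightarrow> (nat \<Rightarrow> complex) \<Rightarrow> bool" where
  "invert_transform x y \<longleftrightarrow>
     (\<forall>n\<ge>1. y n = x n + (\<Sum>i=1..n-1. x i * y (n - i)))"

text \<open>Partial Bell polynomial B_{n,k}(z_1,z_2,...): sum over j_1,j_2,... \<ge> 0 with
  sum j_i = k and sum i*j_i = n. Since i*j_i \<le> n, only j_1..j_n can be nonzero and
  each is at most n; such tuples are encoded as extensional functions on {1..n}.\<close>

definition bell_poly :: "nat \<Rightarrow> nat \<Rightarrow> (nat \<Rightarrow> complex) \<Rightarrow> complex" where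
  "bell_poly n k z =
     (\<Sum>j \<in> {j \<in> {1..n} \<rightarrow>\<^sub>E {0..n}. (\<Sum>i=1..n. j i) = k \<and> (\<Sum>i=1..n. i * j i) = n}.
        of_nat (fact n) / of_nat (\<Prod>i=1..n. fact (j i)) *
        (\<Prod>i=1..n. (z i / of_nat (fact i)) ^ (j i)))"

end

theory Submission
  imports Defs "HOL-Computational_Algebra.Formal_Power_Series"
begin

text \<open>For \<open>W(t) = \<Sum>\<^sub>i\<^sub>\<ge>\<^sub>1 w\<^sub>i t\<^sup>i\<close> the multinomial theorem gives
  \<open>k! B\<^sub>n\<^sub>,\<^sub>k(1! w\<^sub>1, 2! w\<^sub>2, \<dots>) = n! [t\<^sup>n] W\<^sup>k\<close>. The invert transform says
  \<open>Y = X + X Y\<close>; as \<open>X\<close> has no constant term this linear equation has a unique solution,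
  namely \<open>Y = H \<circ> X\<close> with \<open>H = t/(1 - t) = \<Sum>\<^sub>i\<^sub>\<ge>\<^sub>1 t\<^sup>i\<close>. Hence
  \<open>[t\<^sup>n] Y\<^sup>k = \<Sum>\<^sub>i [t\<^sup>i] H\<^sup>k \<cdot> [t\<^sup>n] X\<^sup>i\<close>, and \<open>[t\<^sup>i] H\<^sup>k = binom(i - 1, k - 1)\<close>.\<close>

unbundle no vec_syntax
unbundle fps_syntax

definition weak_compositions :: "'i set \<Rightarrow> nat \<Rightarrow> ('i \<Rightarrow> nat) set" where
  "weak_compositions A k = {j \<in> A \<rightarrow>\<^sub>E {0..k}. sum j A = k}"

lemma finite_weak_compositions: "finite A \<Longrightarrow> finite (weak_compositions A k)"
  unfolding weak_compositions_def
  by (rule finite_subset[of _ "A \<rightarrow>\<^sub>E {0..k}"]) (auto intro: finite_PiE)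

lemma weak_compositions_empty: "weak_compositions {} k = (if k = 0 then {\<lambda>_. undefined} else {})"
  unfolding weak_compositions_def by auto

lemma weak_compositions_insert:
  assumes "b \<notin> A" "finite A"
  shows "weak_compositions (insert b A) k
       = (\<lambda>(m, j). j(b := m)) ` (SIGMA m:{0..k}. weak_compositions A (k - m))"
proof (intro equalityI subsetI)
  fix j assume "j \<in> weak_compositions (insert b A) k"
  then have j: "j \<in> insert b A \<rightarrow>\<^sub>E {0..k}" and sum_j: "j b + sum j A = k"
    using assms unfolding weak_compositions_def by auto
  define j' where "j' = j(b := undefined)"
  have "sum j' A = sum j A"
    unfolding j'_def using assms(1) by (intro sum.cong) auto
  moreover have "j' \<in> A \<rightarrow>\<^sub>E {0..k - j b}"
    using j assms member_le_sum[of _ A j] sum_j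
    by (fastforce simp: j'_def PiE_def extensional_def)
  ultimately have "j' \<in> weak_compositions A (k - j b)"
    unfolding weak_compositions_def using sum_j by auto
  moreover have "j = j'(b := j b)"
    unfolding j'_def by auto
  ultimately show "j \<in> (\<lambda>(m, j). j(b := m)) ` (SIGMA m:{0..k}. weak_compositions A (k - m))"
    using sum_j by (intro image_eqI[where x = "(j b, j')"]) auto
next
  fix j assume "j \<in> (\<lambda>(m, j). j(b := m)) ` (SIGMA m:{0..k}. weak_compositions A (k - m))"
  then obtain m j' where j: "j = j'(b := m)" "m \<le> k" and
    j': "j' \<in> A \<rightarrow>\<^sub>E {0..k - m}" "sum j' A = k - m"
    unfolding weak_compositions_def by auto
  have "sum j A = sum j' A"
    unfolding j(1) using assms(1) by (intro sum.cong) auto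
  then show "j \<in> weak_compositions (insert b A) k"
    using assms j j' unfolding weak_compositions_def
    by (auto simp: PiE_def extensional_def Pi_def)
qed

lemma inj_on_weak_compositions_insert:
  assumes "b \<notin> A"
  shows "inj_on (\<lambda>(m, j). j(b := m)) (SIGMA m:{0..k}. weak_compositions A (k - m))"
proof (rule inj_onI, clarify)
  fix m1 j1 m2 j2
  assume j1: "j1 \<in> weak_compositions A (k - m1)" and j2: "j2 \<in> weak_compositions A (k - m2)"
    and eq: "j1(b := m1) = j2(b := m2)"
  have "j1 b = j2 b"
    using assms j1 j2 unfolding weak_compositions_def by (auto simp: PiE_def extensional_def)
  then show "m1 = m2 \<and> j1 = j2"
    using fun_cong[OF eq] by (metis fun_upd_apply ext)
qed

lemma multinomial_coefficient_split:
  assumes "m \<le> k"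
  shows "(of_nat (fact k) / of_nat (fact m * p) :: 'a::field_char_0)
       = of_nat (k choose m) * (of_nat (fact (k - m)) / of_nat p)"
  using assms by (cases "p = 0") (simp_all add: binomial_fact field_simps)

theorem fps_multinomial:
  fixes a :: "'i \<Rightarrow> 'a::field_char_0 fps"
  assumes "finite A"
  shows "(\<Sum>i\<in>A. a i) ^ k
       = (\<Sum>j\<in>weak_compositions A k.
            fps_const (of_nat (fact k) / of_nat (\<Prod>i\<in>A. fact (j i))) * (\<Prod>i\<in>A. a i ^ j i))"
  using assms
proof (induction A arbitrary: k rule: finite_induct)
  case empty
  then show ?case by (cases k) (auto simp: weak_compositions_empty)
next
  case (insert b A)
  define c where "c k j = fps_const (of_nat (fact k) / of_nat (\<Prod>i\<in>A. fact (j i)) :: 'a)" for k j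
  define g where "g j = fps_const (of_nat (fact k) / of_nat (\<Prod>i\<in>insert b A. fact (j i)))
                        * (\<Prod>i\<in>insert b A. a i ^ j i)" for j
  have g_upd: "g (j(b := m)) = of_nat (k choose m) * a b ^ m * (c (k - m) j * (\<Prod>i\<in>A. a i ^ j i))"
    if "m \<le> k" for j m
  proof -
    have "(\<Prod>i\<in>A. fact ((j(b := m)) i)) = (\<Prod>i\<in>A. fact (j i) :: nat)"
      "(\<Prod>i\<in>A. a i ^ (j(b := m)) i) = (\<Prod>i\<in>A. a i ^ j i)"
      using insert.hyps(2) by (auto intro!: prod.cong)
    with insert.hyps
    have prods: "(\<Prod>i\<in>insert b A. fact ((j(b := m)) i)) = fact m * (\<Prod>i\<in>A. fact (j i) :: nat)"
      "(\<Prod>i\<in>insert b A. a i ^ (j(b := m)) i) = a b ^ m * (\<Prod>i\<in>A. a i ^ j i)"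
      by simp_all
    then show ?thesis
      unfolding g_def c_def prods multinomial_coefficient_split[OF that]
      by (simp flip: fps_const_mult fps_of_nat add: algebra_simps)
  qed
  have "(\<Sum>j\<in>weak_compositions (insert b A) k. g j)
      = (\<Sum>(m, j)\<in>(SIGMA m:{0..k}. weak_compositions A (k - m)). g (j(b := m)))"
    unfolding weak_compositions_insert[OF insert.hyps(2,1)]
    by (subst sum.reindex[OF inj_on_weak_compositions_insert[OF insert.hyps(2)]])
       (simp add: case_prod_beta)
  also have "\<dots> = (\<Sum>m\<in>{0..k}. \<Sum>j\<in>weak_compositions A (k - m). g (j(b := m)))"
    by (rule sum.Sigma[symmetric]) (auto intro: finite_weak_compositions insert)
  also have "\<dots> = (\<Sum>m\<le>k. of_nat (k choose m) * a b ^ m * (\<Sum>i\<in>A. a i) ^ (k - m))"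
    by (simp add: g_upd insert.IH c_def sum_distrib_left atLeast0AtMost)
  also have "\<dots> = (a b + (\<Sum>i\<in>A. a i)) ^ k"
    by (rule binomial_ring[symmetric])
  finally show ?case
    using insert.hyps by (simp add: g_def)
qed

lemma fps_const_prod: "(\<Prod>i\<in>A. fps_const (f i)) = fps_const (\<Prod>i\<in>A. f i :: 'a::comm_ring_1)"
  by (induction A rule: infinite_finite_induct) (auto simp flip: fps_const_mult)

lemma fps_power_nth_cong:
  fixes f g :: "'a::comm_semiring_1 fps"
  assumes "\<And>i. i \<le> n \<Longrightarrow> f $ i = g $ i"
  shows "(f ^ k) $ n = (g ^ k) $ n"
  using assms
proof (induction k arbitrary: n)
  case (Suc k)
  then show ?case
    by (simp add: fps_mult_nth)
qed simp

lemma fps_sum_monomials_nth: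
  assumes "finite A"
  shows "(\<Sum>i\<in>A. fps_const (c i) * fps_X ^ i) $ m = (if m \<in> A then c m else (0::'a::comm_ring_1))"
proof -
  have "(\<Sum>i\<in>A. fps_const (c i) * fps_X ^ i) $ m = (\<Sum>i\<in>A. if m = i then c m else 0)"
    unfolding fps_sum_nth by (rule sum.cong) auto
  then show ?thesis
    using assms by simp
qed

lemma fps_power_sum_monomials_nth:
  fixes c :: "nat \<Rightarrow> 'a::field_char_0"
  assumes "finite A"
  shows "(\<Sum>i\<in>A. fps_const (c i) * fps_X ^ i) ^ k $ n
       = (\<Sum>j | j \<in> weak_compositions A k \<and> (\<Sum>i\<in>A. i * j i) = n.
            of_nat (fact k) / of_nat (\<Prod>i\<in>A. fact (j i)) * (\<Prod>i\<in>A. c i ^ j i))"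
proof -
  define coeff where
    "coeff j = of_nat (fact k) / of_nat (\<Prod>i\<in>A. fact (j i)) * (\<Prod>i\<in>A. c i ^ j i)" for j
  have "(\<Sum>i\<in>A. fps_const (c i) * fps_X ^ i) ^ k
      = (\<Sum>j\<in>weak_compositions A k. fps_const (coeff j) * fps_X ^ (\<Sum>i\<in>A. i * j i))"
    unfolding fps_multinomial[OF assms] coeff_def
    by (intro sum.cong refl)
       (simp add: power_mult_distrib prod.distrib power_sum power_mult fps_const_prod ac_simps)
  then have "(\<Sum>i\<in>A. fps_const (c i) * fps_X ^ i) ^ k $ n
      = (\<Sum>j\<in>weak_compositions A k. fps_const (coeff j) * fps_X ^ (\<Sum>i\<in>A. i * j i)) $ n"
    by simp
  also have "\<dots> = (\<Sum>j\<in>weak_compositions A k. if (\<Sum>i\<in>A. i * j i) = n then coeff j else 0)"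
    unfolding fps_sum_nth fps_mult_left_const_nth fps_X_power_nth by (intro sum.cong refl) simp
  also have "\<dots> = (\<Sum>j | j \<in> weak_compositions A k \<and> (\<Sum>i\<in>A. i * j i) = n. coeff j)"
    by (rule sum.inter_filter[symmetric]) (simp add: finite_weak_compositions assms)
  finally show ?thesis
    unfolding coeff_def .
qed

lemma weak_compositions_of_weight:
  "{j \<in> weak_compositions {1..n} k. (\<Sum>i=1..n. i * j i) = n}
 = {j \<in> {1..n} \<rightarrow>\<^sub>E {0..n}. (\<Sum>i=1..n. j i) = k \<and> (\<Sum>i=1..n. i * j i) = n}"
proof -
  have le_weight: "j i \<le> n"
    if "i \<in> {1..n}" "(\<Sum>i=1..n. i * j i) = n" for i and j :: "nat \<Rightarrow> nat"
  proof -
    have "j i \<le> i * j i"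
      using that by simp
    also have "\<dots> \<le> (\<Sum>i=1..n. i * j i)"
      using member_le_sum[of i "{1..n}" "\<lambda>i. i * j i"] that by simp
    finally show ?thesis
      using that(2) by simp
  qed
  show ?thesis
    unfolding weak_compositions_def
    by (auto simp: PiE_iff intro: le_weight member_le_sum)
qed

definition seq_fps :: "(nat \<Rightarrow> 'a::zero) \<Rightarrow> 'a fps" where
  "seq_fps w = Abs_fps (\<lambda>i. if i = 0 then 0 else w i)"

lemma seq_fps_nth_0 [simp]: "seq_fps w $ 0 = 0"
  by (simp add: seq_fps_def)

lemma bell_poly_eq_fps_power_nth:
  "of_nat (fact k) * bell_poly n k (\<lambda>i. of_nat (fact i) * w i)
 = of_nat (fact n) * (seq_fps w ^ k $ n)"
proof -
  have "seq_fps w ^ k $ n = (\<Sum>i\<in>{1..n}. fps_const (w i) * fps_X ^ i) ^ k $ n"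
    by (rule fps_power_nth_cong) (simp add: seq_fps_def fps_sum_monomials_nth)
  also have "\<dots> = (\<Sum>j | j \<in> {1..n} \<rightarrow>\<^sub>E {0..n} \<and> (\<Sum>i=1..n. j i) = k \<and> (\<Sum>i=1..n. i * j i) = n.
                     of_nat (fact k) / of_nat (\<Prod>i=1..n. fact (j i)) * (\<Prod>i=1..n. w i ^ j i))"
    using weak_compositions_of_weight[of n k]
    by (simp add: fps_power_sum_monomials_nth)
  finally show ?thesis
    by (simp add: bell_poly_def sum_distrib_left mult.left_commute)
qed

definition shifted_geometric_fps :: "'a::comm_ring_1 fps" where
  "shifted_geometric_fps = Abs_fps (\<lambda>i. if i = 0 then 0 else 1)"

lemma shifted_geometric_fps_fixpoint:
  "shifted_geometric_fps = fps_X + fps_X * (shifted_geometric_fps :: 'a::comm_ring_1 fps)"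
  by (auto simp: fps_eq_iff shifted_geometric_fps_def fps_X_mult_nth)

lemma shifted_geometric_fps_power_Suc_nth_Suc:
  "(shifted_geometric_fps ^ Suc k) $ Suc i = (of_nat (i choose k) :: 'a::comm_ring_1)"
proof (induction i arbitrary: k)
  have step: "((shifted_geometric_fps :: 'a fps) ^ Suc k) $ Suc i
            = (shifted_geometric_fps ^ k) $ i + (shifted_geometric_fps ^ Suc k) $ i" for k i
  proof -
    have eq: "(shifted_geometric_fps :: 'a fps) ^ Suc k
        = fps_X * shifted_geometric_fps ^ k + fps_X * shifted_geometric_fps ^ Suc k"
      by (subst (1) power_Suc, subst (1) shifted_geometric_fps_fixpoint) (simp add: algebra_simps)
    show ?thesis
      by (subst eq) (simp add: fps_X_mult_nth del: power_Suc)
  qed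
  {
    case 0
    show ?case
      by (cases k) (simp_all add: step fps_power_zeroth shifted_geometric_fps_def)
  next
    case (Suc i)
    note IH = Suc.IH
    show ?case
    proof (cases k)
      case 0
      then show ?thesis
        by (simp add: shifted_geometric_fps_def)
    next
      case (Suc m)
      then show ?thesis
        using step[of k "Suc i"] IH[of m] IH[of k] by simp
    qed
  }
qed

lemma shifted_geometric_fps_power_nth:
  assumes "1 \<le> k"
  shows "(shifted_geometric_fps ^ k) $ i
       = (if i = 0 then 0 else (of_nat ((i - 1) choose (k - 1)) :: 'a::comm_ring_1))"
  using assms shifted_geometric_fps_power_Suc_nth_Suc[of "k - 1" "i - 1", where 'a = 'a]
  by (cases i) (simp_all add: fps_power_zeroth shifted_geometric_fps_def zero_power)

lemma shifted_geometric_fps_power_compose_nth: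
  fixes f :: "'a::comm_ring_1 fps"
  assumes "1 \<le> k"
  shows "(shifted_geometric_fps ^ k oo f) $ n
       = (\<Sum>i=k..n. of_nat ((i - 1) choose (k - 1)) * (f ^ i $ n))"
proof -
  have "(shifted_geometric_fps ^ k oo f) $ n = (\<Sum>i=0..n. (shifted_geometric_fps ^ k) $ i * (f ^ i $ n))"
    by (rule fps_compose_nth)
  also have "\<dots> = (\<Sum>i=k..n. (shifted_geometric_fps ^ k) $ i * (f ^ i $ n))"
    using assms by (intro sum.mono_neutral_right) (auto simp: shifted_geometric_fps_power_nth binomial_eq_0)
  also have "\<dots> = (\<Sum>i=k..n. of_nat ((i - 1) choose (k - 1)) * (f ^ i $ n))"
    using assms by (intro sum.cong) (auto simp: shifted_geometric_fps_power_nth)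
  finally show ?thesis .
qed

lemma fps_linear_fixpoint_unique:
  fixes f g h :: "'a::idom fps"
  assumes "f $ 0 = 0" "g = a + f * g" "h = a + f * h"
  shows "g = h"
proof -
  have "(1 - f) * (g - h) = (g - f * g) - (h - f * h)"
    by (simp add: algebra_simps)
  also have "\<dots> = 0"
    using assms(2,3) by (metis add_diff_cancel_right' diff_self)
  finally have "(1 - f) * (g - h) = 0" .
  moreover have "(1 - f) $ 0 \<noteq> 0"
    using assms(1) by simp
  ultimately show ?thesis
    by (metis divisors_zero eq_iff_diff_eq_0 fps_nonzero_nth)
qed

lemma invert_transform_fps_eq:
  assumes "invert_transform x y"
  shows "seq_fps y = seq_fps x + seq_fps x * seq_fps y"
proof (rule fps_ext)
  fix n
  show "seq_fps y $ n = (seq_fps x + seq_fps x * seq_fps y) $ n"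
  proof (cases "n = 0")
    case False
    have "(seq_fps x * seq_fps y) $ n = (\<Sum>i=0..n. seq_fps x $ i * seq_fps y $ (n - i))"
      by (rule fps_mult_nth)
    also have "\<dots> = (\<Sum>i=1..n-1. x i * y (n - i))"
      by (rule sum.mono_neutral_cong_right) (auto simp: seq_fps_def)
    finally show ?thesis
      using False assms unfolding invert_transform_def by (simp add: seq_fps_def)
  qed simp
qed

lemma invert_transform_eq_compose:
  assumes "invert_transform x y"
  shows "seq_fps y = shifted_geometric_fps oo seq_fps x"
proof (rule fps_linear_fixpoint_unique)
  show "seq_fps y = seq_fps x + seq_fps x * seq_fps y"
    using assms by (rule invert_transform_fps_eq)
  have "shifted_geometric_fps oo seq_fps x = (fps_X + fps_X * shifted_geometric_fps) oo seq_fps x"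
    by (subst shifted_geometric_fps_fixpoint) (rule refl)
  then show "shifted_geometric_fps oo seq_fps x
           = seq_fps x + seq_fps x * (shifted_geometric_fps oo seq_fps x)"
    by (simp add: fps_compose_add_distrib fps_compose_mult_distrib)
qed simp

theorem mainTheorem7:
  fixes x y :: "nat \<Rightarrow> complex" and n k :: nat
  assumes "invert_transform x y"
    and "1 \<le> k" and "k \<le> n"
  shows "of_nat (fact k) * bell_poly n k (\<lambda>i. of_nat (fact i) * y i)
       = (\<Sum>i=k..n. of_nat ((i - 1) choose (k - 1)) * of_nat (fact i)
                     * bell_poly n i (\<lambda>m. of_nat (fact m) * x m))"
proof -
  have "of_nat (fact k) * bell_poly n k (\<lambda>i. of_nat (fact i) * y i)
      = of_nat (fact n) * (seq_fps y ^ k $ n)"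
    by (rule bell_poly_eq_fps_power_nth)
  also have "seq_fps y ^ k = shifted_geometric_fps ^ k oo seq_fps x"
    unfolding invert_transform_eq_compose[OF assms(1)] by (simp add: fps_compose_power)
  also have "of_nat (fact n) * (\<dots> $ n)
      = (\<Sum>i=k..n. of_nat ((i - 1) choose (k - 1)) * (of_nat (fact n) * (seq_fps x ^ i $ n)))"
    using assms(2) by (simp add: shifted_geometric_fps_power_compose_nth sum_distrib_left ac_simps)
  also have "\<dots> = (\<Sum>i=k..n. of_nat ((i - 1) choose (k - 1)) * of_nat (fact i)
                     * bell_poly n i (\<lambda>m. of_nat (fact m) * x m))"
    by (simp only: bell_poly_eq_fps_power_nth mult.assoc)
  finally show ?thesis .
qed

end
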